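(* Let $j,k_G,k_H$ be positive integers with $j\le k_G\le k_H$, let $G$ be a $(j,k_G)$-biclique and $H$ a $(j,k_H)$-biclique, and let $g(x)$ and $h(x)$ be the interesting factors of $P_G(x)$ and $P_H(x)$ respectively. If $\bar G$ and $\bar H$ are matching equivalent, then $g(x)=h(x+k_H-k_G)$.
   Context: All graphs are finite and simple. For integers $1\le j\le k$, a $(j,k)$-biclique is a graph whose vertex set is the disjoint union of a $j$-clique and a $k$-clique, with an arbitrary set of additional edges each joining a vertex of the $j$-clique to a vertex of the $k$-clique; $\bar G$ denotes the complement of $G$. $P_G(x)$ is the chromatic polynomial, $(x)_n=x(x-1)\cdots(x-n+1)$ the falling factorial. For a $(j,k)$-biclique $G$, the polynomial $(x)_k$ divides $P_G(x)$, and the interesting factor of $P_G$ is the degree-$j$ polynomial $g(x)=P_G(x)/(x)_k$. $m_F^i$ denotes the number of matchings with $i$ edges in a graph $F$; two graphs $F_1,F_2$ are matching equivalent if $m_{F_1}^i=m_{F_2}^i$ for all $i\ge 0$. *)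

theory Defs
  imports "HOL-Library.FuncSet" "HOL-Computational_Algebra.Polynomial"
begin

definition all_pairs :: "'a set \<Rightarrow> 'a set set" where
  "all_pairs V = {e. \<exists>u v. u \<in> V \<and> v \<in> V \<and> u \<noteq> v \<and> e = {u, v}}"

definition simple_graph :: "'a set \<Rightarrow> 'a set set \<Rightarrow> bool" where
  "simple_graph V E \<longleftrightarrow> finite V \<and> E \<subseteq> all_pairs V"

definition compl_edges :: "'a set \<Rightarrow> 'a set set \<Rightarrow> 'a set set" where
  "compl_edges V E = all_pairs V - E"

definition biclique :: "nat \<Rightarrow> nat \<Rightarrow> 'a set \<Rightarrow> 'a set set \<Rightarrow> bool" where
  "biclique j k V E \<longleftrightarrow> simple_graph V E \<and>
     (\<exists>A B. A \<inter> B = {} \<and> V = A \<union> B \<and> card A = j \<and> card B = k \<and>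
            all_pairs A \<subseteq> E \<and> all_pairs B \<subseteq> E)"

definition matchings :: "'a set set \<Rightarrow> nat \<Rightarrow> 'a set set set" where
  "matchings E i = {M. M \<subseteq> E \<and> card M = i \<and>
       (\<forall>e\<in>M. \<forall>e'\<in>M. e \<noteq> e' \<longrightarrow> e \<inter> e' = {})}"

definition matching_number :: "'a set set \<Rightarrow> nat \<Rightarrow> nat" where
  "matching_number E i = card (matchings E i)"

definition matching_equivalent :: "'a set set \<Rightarrow> 'b set set \<Rightarrow> bool" where
  "matching_equivalent E1 E2 \<longleftrightarrow> (\<forall>i. matching_number E1 i = matching_number E2 i)"

definition colourings :: "'a set \<Rightarrow> 'a set set \<Rightarrow> nat \<Rightarrow> ('a \<Rightarrow> nat) set" where
  "colourings V E n = {f \<in> V \<rightarrow>\<^sub>E {..<n}. \<forall>u v. {u, v} \<in> E \<longrightarrow> u \<noteq> v \<longrightarrow> f u \<noteq> f v}"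

definition chrom_poly :: "'a set \<Rightarrow> 'a set set \<Rightarrow> int poly" where
  "chrom_poly V E = (THE p. \<forall>n::nat. poly p (int n) = int (card (colourings V E n)))"

definition falling_poly :: "nat \<Rightarrow> int poly" where
  "falling_poly k = (\<Prod>i<k. [:- int i, 1:])"

definition interesting_factor :: "nat \<Rightarrow> 'a set \<Rightarrow> 'a set set \<Rightarrow> int poly" where
  "interesting_factor k V E = chrom_poly V E div falling_poly k"

end

theory Submission
  imports Defs
begin

text \<open>
  Let G be a (j,k)-biclique on the cliques A (|A| = j) and B (|B| = k), and let
  F be the edge set of its complement; every edge of F joins A to B.  A proper colouring f of G
  is injective on A and on B, so the cross pairs {a,b} with f a = f b form a matching of F
  (its "coincidence matching").  Conversely, the colourings with a prescribed coincidence
  matching M are exactly the maps that factor through the contraction of each edge of M onto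
  its A-end and are injective on the j + k - |M| remaining vertices; there are (n)_(j+k-|M|)
  of them.  Summing over M gives
     P_G(x) = \<Sum>_(i\<le>j) m_F^i (x)_(j+k-i) = (x)_k \<cdot> \<Sum>_(i\<le>j) m_F^i (x-k)_(j-i),
  so the interesting factor is g(x) = \<Sum>_(i\<le>j) m_F^i (x-k)_(j-i).  For matching equivalent
  complements the coefficients agree, and substituting x + k_H - k_G turns (x-k_H)_m into
  (x-k_G)_m, which is the theorem.
\<close>

definition shifted_falling_poly :: "nat \<Rightarrow> nat \<Rightarrow> int poly" where
  "shifted_falling_poly c m = (\<Prod>i<m. [:- (int c + int i), 1:])"

lemma poly_falling_poly: "poly (falling_poly m) x = (\<Prod>i<m. x - int i)"
  unfolding falling_poly_def by (simp add: poly_prod)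

lemma poly_shifted_falling_poly: "poly (shifted_falling_poly c m) x = (\<Prod>i<m. x - (int c + int i))"
  unfolding shifted_falling_poly_def by (auto simp: poly_prod intro!: prod.cong)

lemma falling_poly_add: "falling_poly (k + m) = falling_poly k * shifted_falling_poly k m"
proof (induction m)
  case 0
  then show ?case by (simp add: shifted_falling_poly_def)
next
  case (Suc m)
  have "falling_poly (k + Suc m) = falling_poly (k + m) * [:- int (k + m), 1:]"
    by (simp add: falling_poly_def)
  also have "\<dots> = falling_poly k * (shifted_falling_poly k m * [:- (int k + int m), 1:])"
    by (simp only: Suc.IH mult.assoc of_nat_add)
  also have "shifted_falling_poly k m * [:- (int k + int m), 1:] = shifted_falling_poly k (Suc m)"
    by (simp add: shifted_falling_poly_def)
  finally show ?case .
qed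

lemma falling_poly_nonzero: "falling_poly k \<noteq> 0"
  unfolding falling_poly_def by (simp add: prod_zero_iff)

lemma shifted_falling_poly_pcompose:
  "pcompose (shifted_falling_poly (c + d) m) [:int d, 1:] = shifted_falling_poly c m"
  by (rule poly_eq_poly_eq_iff[THEN iffD1])
    (simp add: fun_eq_iff poly_pcompose poly_shifted_falling_poly algebra_simps)

lemma poly_eq_on_nat:
  fixes p q :: "'a :: {idom, ring_char_0} poly"
  assumes "\<And>n::nat. poly p (of_nat n) = poly q (of_nat n)"
  shows "p = q"
proof (rule ccontr)
  assume "p \<noteq> q"
  then have "finite {x. poly (p - q) x = 0}" by (intro poly_roots_finite) simp
  moreover have "range of_nat \<subseteq> {x. poly (p - q) x = 0}" using assms by auto
  moreover have "infinite (range (of_nat :: nat \<Rightarrow> 'a))"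
    using finite_imageD inj_of_nat by blast
  ultimately show False using finite_subset by blast
qed

text \<open>The truncated natural-number falling factorial agrees with the integer one (both vanish when m > n).\<close>
lemma int_prod_diff: "int (\<Prod>t<m. n - t) = (\<Prod>t<m. int n - int t)"
proof (induction m)
  case 0
  then show ?case by simp
next
  case (Suc m)
  show ?case
  proof (cases "m \<le> n")
    case True
    then show ?thesis using Suc by (simp add: of_nat_diff)
  next
    case False
    then have zero: "(\<Prod>t<Suc m. n - t) = 0" "(\<Prod>t<Suc m. int n - int t) = 0"
      by (auto intro!: prod_zero bexI[of _ n])
    show ?thesis by (subst zero(1), subst zero(2)) simp
  qed
qed

text \<open>If r is a retraction of V onto r ` V, the maps V \<rightarrow> {..<n} that are constant on the
  fibres of r and injective on r ` V correspond to the injections r ` V \<rightarrow> {..<n}; hence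
  there are (n)_(card (r ` V)) of them.\<close>
lemma card_maps_through_retraction:
  fixes r :: "'a \<Rightarrow> 'a"
  assumes fin: "finite V" and r_into: "r ` V \<subseteq> V" and r_idem: "\<And>x. x \<in> V \<Longrightarrow> r (r x) = r x"
  shows "card {f \<in> V \<rightarrow>\<^sub>E {..<n}. (\<forall>x\<in>V. f (r x) = f x) \<and> inj_on f (r ` V)}
           = (\<Prod>i<card (r ` V). n - i)"
proof -
  let ?W = "r ` V"
  let ?S = "{f \<in> V \<rightarrow>\<^sub>E {..<n}. (\<forall>x\<in>V. f (r x) = f x) \<and> inj_on f ?W}"
  define I where "I = {g \<in> ?W \<rightarrow>\<^sub>E {..<n}. inj_on g ?W}"
  have W_V: "?W \<subseteq> V" by (fact r_into)
  have fixed: "r w = w" if "w \<in> ?W" for w using that r_idem by auto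
  have "bij_betw (\<lambda>f. restrict f ?W) ?S I"
  proof (rule bij_betw_byWitness[where f' = "\<lambda>g. restrict (g \<circ> r) V"])
    show "\<forall>f\<in>?S. restrict (restrict f ?W \<circ> r) V = f"
    proof
      fix f assume f: "f \<in> ?S"
      show "restrict (restrict f ?W \<circ> r) V = f"
      proof
        fix x
        have "f x = undefined" if "x \<notin> V" using f that by (blast intro: PiE_arb)
        then show "restrict (restrict f ?W \<circ> r) V x = f x"
          using f by (cases "x \<in> V") simp_all
      qed
    qed
    show "\<forall>g\<in>I. restrict (restrict (g \<circ> r) V) ?W = g"
    proof
      fix g assume g: "g \<in> I"
      show "restrict (restrict (g \<circ> r) V) ?W = g"
      proof
        fix w
        have "g w = undefined" if "w \<notin> ?W" using g that unfolding I_def by (blast intro: PiE_arb)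
        moreover have "w \<in> V" "r w = w" if "w \<in> ?W" using that W_V fixed by blast+
        ultimately show "restrict (restrict (g \<circ> r) V) ?W w = g w"
          by (cases "w \<in> ?W") simp_all
      qed
    qed
    show "(\<lambda>f. restrict f ?W) ` ?S \<subseteq> I"
    proof
      fix h assume "h \<in> (\<lambda>f. restrict f ?W) ` ?S"
      then obtain f where "f \<in> ?S" "h = restrict f ?W" by blast
      then show "h \<in> I" using W_V by (auto simp: I_def inj_on_def)
    qed
    show "(\<lambda>g. restrict (g \<circ> r) V) ` I \<subseteq> ?S"
    proof
      fix h assume "h \<in> (\<lambda>g. restrict (g \<circ> r) V) ` I"
      then obtain g where g: "g \<in> ?W \<rightarrow>\<^sub>E {..<n}" "inj_on g ?W" and h: "h = restrict (g \<circ> r) V"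
        unfolding I_def by blast
      have "h \<in> V \<rightarrow>\<^sub>E {..<n}" using g(1) unfolding h by auto
      moreover have "\<forall>x\<in>V. h (r x) = h x" using r_into r_idem unfolding h by auto
      moreover have "inj_on h ?W"
        using g(2) fixed W_V unfolding h inj_on_def by (metis comp_apply restrict_apply' subsetD)
      ultimately show "h \<in> ?S" by blast
    qed
  qed
  then have "card ?S = card I" by (rule bij_betw_same_card)
  also have "\<dots> = (\<Prod>i<card ?W. n - i)"
    unfolding I_def using fin
    by (subst card_inj_on_subset_funcset) (auto simp: atLeast0LessThan)
  finally show ?thesis .
qed

locale biclique_split =
  fixes V :: "'a set" and E :: "'a set set" and A B :: "'a set"
  assumes finite_V: "finite V" and edges_in_V: "E \<subseteq> all_pairs V"
    and disjoint: "A \<inter> B = {}" and V_split: "V = A \<union> B"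
    and clique_A: "all_pairs A \<subseteq> E" and clique_B: "all_pairs B \<subseteq> E"
begin

abbreviation F :: "'a set set" where "F \<equiv> compl_edges V E"

lemma compl_edge_cases:
  assumes "e \<in> F" obtains a b where "a \<in> A" "b \<in> B" "e = {a, b}"
proof -
  obtain u v where uv: "u \<in> V" "v \<in> V" "u \<noteq> v" "e = {u, v}" "{u, v} \<notin> E"
    using assms unfolding compl_edges_def all_pairs_def by auto
  have "\<not> (u \<in> A \<and> v \<in> A)" "\<not> (u \<in> B \<and> v \<in> B)"
    using uv clique_A clique_B unfolding all_pairs_def by blast+
  then have "(u \<in> A \<and> v \<in> B) \<or> (v \<in> A \<and> u \<in> B)" using uv V_split by blast
  then show ?thesis using that uv by (metis insert_commute)
qed

lemma cross_pair_in_compl: "a \<in> A \<Longrightarrow> b \<in> B \<Longrightarrow> {a, b} \<in> F \<longleftrightarrow> {a, b} \<notin> E"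
  using disjoint V_split unfolding compl_edges_def all_pairs_def by blast

definition matching :: "'a set set \<Rightarrow> bool" where
  "matching M \<longleftrightarrow> M \<subseteq> F \<and> (\<forall>e\<in>M. \<forall>e'\<in>M. e \<noteq> e' \<longrightarrow> e \<inter> e' = {})"

lemma finite_matchings: "finite {M. matching M}"
proof -
  have "F \<subseteq> Pow V" unfolding compl_edges_def all_pairs_def by auto
  then have "{M. matching M} \<subseteq> Pow (Pow V)" unfolding matching_def by auto
  then show ?thesis using finite_V by (simp add: finite_subset)
qed

lemma matchings_eq: "matchings F i = {M. matching M \<and> card M = i}"
  unfolding matchings_def matching_def by blast

lemma matching_edge:
  assumes "matching M" "e \<in> M" obtains a b where "a \<in> A" "b \<in> B" "e = {a, b}"
proof -
  have "e \<in> F" using assms unfolding matching_def by blast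
  then show ?thesis using that by (rule compl_edge_cases)
qed

lemma matching_meet:
  assumes "matching M" "e \<in> M" "e' \<in> M" "x \<in> e" "x \<in> e'"
  shows "e = e'"
  using assms unfolding matching_def by blast

lemma matching_common_B:
  assumes "matching M" "a \<in> A" "a' \<in> A" "b \<in> B" "{a, b} \<in> M" "{a', b} \<in> M"
  shows "a = a'"
proof -
  have "{a, b} = {a', b}" using matching_meet[OF assms(1,5,6), of b] by simp
  then show ?thesis using assms(2,4) disjoint by (auto simp: doubleton_eq_iff)
qed

lemma matching_common_A:
  assumes "matching M" "a \<in> A" "b \<in> B" "b' \<in> B" "{a, b} \<in> M" "{a, b'} \<in> M"
  shows "b = b'"
proof -
  have "{a, b} = {a, b'}" using matching_meet[OF assms(1,5,6), of a] by simp
  then show ?thesis using assms(2,3) disjoint by (auto simp: doubleton_eq_iff)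
qed

text \<open>The partner of a vertex x: the A-end of the matching edge at x if there is one, otherwise x
  itself.  Contracting every edge of M onto its A-end is the map partner M.\<close>
definition partner :: "'a set set \<Rightarrow> 'a \<Rightarrow> 'a" where
  "partner M x = (if \<exists>a\<in>A. {a, x} \<in> M then SOME a. a \<in> A \<and> {a, x} \<in> M else x)"

lemma partner_matched:
  assumes "\<exists>a\<in>A. {a, x} \<in> M"
  shows "partner M x \<in> A \<and> {partner M x, x} \<in> M"
proof -
  have "\<exists>a. a \<in> A \<and> {a, x} \<in> M" using assms by blast
  then have "(SOME a. a \<in> A \<and> {a, x} \<in> M) \<in> A \<and> {SOME a. a \<in> A \<and> {a, x} \<in> M, x} \<in> M"
    by (rule someI_ex)
  then show ?thesis using assms by (simp add: partner_def)
qed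

lemma partner_unmatched: "\<not> (\<exists>a\<in>A. {a, x} \<in> M) \<Longrightarrow> partner M x = x"
  by (simp add: partner_def)

lemma partner_outside_B: "matching M \<Longrightarrow> x \<notin> B \<Longrightarrow> partner M x = x"
  unfolding partner_def using disjoint
  by (auto elim!: matching_edge simp: doubleton_eq_iff)

lemma partner_eq_iff:
  assumes M: "matching M" and a: "a \<in> A" and b: "b \<in> B"
  shows "partner M b = a \<longleftrightarrow> {a, b} \<in> M"
proof
  assume "{a, b} \<in> M"
  then have "partner M b \<in> A \<and> {partner M b, b} \<in> M" using partner_matched[of b M] a by blast
  then show "partner M b = a" using matching_common_B[OF M _ a b] \<open>{a, b} \<in> M\<close> by blast
next
  assume pb: "partner M b = a"
  have "a \<noteq> b" using a b disjoint by blast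
  then have "\<exists>a\<in>A. {a, b} \<in> M" using pb partner_unmatched by metis
  then show "{a, b} \<in> M" using partner_matched pb by blast
qed

lemma partner_of_B: "b \<in> B \<Longrightarrow> partner M b = b \<or> partner M b \<in> A"
  using partner_matched partner_unmatched by blast

lemma partner_in_V: "matching M \<Longrightarrow> x \<in> V \<Longrightarrow> partner M x \<in> V"
  using partner_of_B[of x M] partner_outside_B[of M x] V_split by (cases "x \<in> B") auto

lemma partner_idem: "matching M \<Longrightarrow> x \<in> V \<Longrightarrow> partner M (partner M x) = partner M x"
  using partner_of_B partner_outside_B V_split disjoint by (metis IntI empty_iff)

definition matched :: "'a set set \<Rightarrow> 'a set" where
  "matched M = {b \<in> B. \<exists>a\<in>A. {a, b} \<in> M}"

lemma partner_fixed: "matching M \<Longrightarrow> x \<in> V \<Longrightarrow> x \<notin> matched M \<Longrightarrow> partner M x = x"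
  using partner_outside_B partner_unmatched unfolding matched_def by blast

lemma partner_not_matched: "matching M \<Longrightarrow> x \<in> V \<Longrightarrow> partner M x \<notin> matched M"
proof (cases "x \<in> matched M")
  case True
  then have "partner M x \<in> A" using partner_matched unfolding matched_def by blast
  then show ?thesis using disjoint unfolding matched_def by blast
qed (simp add: partner_fixed)

lemma partner_image: "matching M \<Longrightarrow> partner M ` V = V - matched M"
  using partner_in_V partner_not_matched partner_fixed by (auto intro: rev_image_eqI)

lemma matched_bij: "matching M \<Longrightarrow> bij_betw (\<lambda>b. {partner M b, b}) (matched M) M"
proof -
  assume M: "matching M"
  have spec: "partner M b \<in> A \<and> {partner M b, b} \<in> M" if "b \<in> matched M" for b
    using that partner_matched unfolding matched_def by blast
  show ?thesis
  proof (rule bij_betwI')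
    fix x y assume "x \<in> matched M" "y \<in> matched M"
    then show "({partner M x, x} = {partner M y, y}) = (x = y)"
      using spec disjoint unfolding matched_def by (auto simp: doubleton_eq_iff)
  next
    fix x assume "x \<in> matched M"
    then show "{partner M x, x} \<in> M" using spec by blast
  next
    fix e assume "e \<in> M"
    then obtain a b where ab: "a \<in> A" "b \<in> B" "e = {a, b}" using M by (blast elim: matching_edge)
    then have "b \<in> matched M" "partner M b = a"
      using \<open>e \<in> M\<close> partner_eq_iff[OF M] unfolding matched_def by blast+
    then show "\<exists>b\<in>matched M. e = {partner M b, b}" using ab by blast
  qed
qed

lemma card_partner_image: "matching M \<Longrightarrow> card (partner M ` V) = card V - card M"
proof -
  assume M: "matching M"
  have "matched M \<subseteq> V" unfolding matched_def using V_split by blast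
  moreover have "card (matched M) = card M" using bij_betw_same_card[OF matched_bij[OF M]] .
  ultimately show ?thesis
    unfolding partner_image[OF M] using finite_V by (simp add: card_Diff_subset finite_subset)
qed

text \<open>A matching has at most |A| edges: the partner map is injective on the matched vertices.\<close>
lemma card_matching_le: "matching M \<Longrightarrow> card M \<le> card A"
proof -
  assume M: "matching M"
  have spec: "x \<in> B \<and> partner M x \<in> A \<and> {partner M x, x} \<in> M" if "x \<in> matched M" for x
    using that partner_matched unfolding matched_def by blast
  have "inj_on (partner M) (matched M)"
  proof (rule inj_onI)
    fix x y assume "x \<in> matched M" "y \<in> matched M" "partner M x = partner M y"
    then show "x = y" using spec matching_common_A[OF M] by metis
  qed
  moreover have "partner M ` matched M \<subseteq> A" using spec by blast
  moreover have "finite A" using finite_V V_split by simp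
  ultimately have "card (matched M) \<le> card A" by (rule card_inj_on_le)
  then show ?thesis using bij_betw_same_card[OF matched_bij[OF M]] by simp
qed

definition pattern_colourings :: "nat \<Rightarrow> 'a set set \<Rightarrow> ('a \<Rightarrow> nat) set" where
  "pattern_colourings n M = {f \<in> V \<rightarrow>\<^sub>E {..<n}. inj_on f A \<and> inj_on f B \<and>
     (\<forall>a\<in>A. \<forall>b\<in>B. f a = f b \<longleftrightarrow> {a, b} \<in> M)}"

lemma partner_image_iff:
  assumes M: "matching M"
  shows "x \<in> partner M ` V \<longleftrightarrow> x \<in> A \<or> (x \<in> B \<and> partner M x = x)"
proof -
  have "x \<notin> matched M" if "x \<in> B" "partner M x = x"
    using that partner_matched disjoint unfolding matched_def by fastforce
  moreover have "partner M x = x" if "x \<in> B" "x \<notin> matched M"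
    using that partner_unmatched unfolding matched_def by blast
  ultimately show ?thesis
    unfolding partner_image[OF M] using V_split disjoint unfolding matched_def by blast
qed

lemma pattern_colouring_factors:
  assumes M: "matching M" and f: "f \<in> pattern_colourings n M"
  shows "\<forall>x\<in>V. f (partner M x) = f x" and "inj_on f (partner M ` V)"
proof -
  have injA: "inj_on f A" and injB: "inj_on f B"
    and same: "\<And>a b. a \<in> A \<Longrightarrow> b \<in> B \<Longrightarrow> f a = f b \<longleftrightarrow> {a, b} \<in> M"
    using f unfolding pattern_colourings_def by blast+
  have cross: "f a = f b \<longleftrightarrow> partner M b = a" if "a \<in> A" "b \<in> B" for a b
    using same[OF that] partner_eq_iff[OF M that] by simp
  show "\<forall>x\<in>V. f (partner M x) = f x"
  proof
    fix x assume "x \<in> V"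
    show "f (partner M x) = f x"
    proof (cases "x \<in> B \<and> partner M x \<in> A")
      case True
      then show ?thesis using cross by blast
    next
      case False
      then have "partner M x = x" using partner_of_B partner_outside_B[OF M] by blast
      then show ?thesis by simp
    qed
  qed
  show "inj_on f (partner M ` V)"
  proof (rule inj_onI)
    fix x y assume xy: "x \<in> partner M ` V" "y \<in> partner M ` V" "f x = f y"
    have no_cross: "f u \<noteq> f v" if "u \<in> A" "v \<in> B" "partner M v = v" for u v
    proof -
      have "u \<noteq> v" using that disjoint by blast
      then show ?thesis using cross[OF that(1,2)] that(3) by simp
    qed
    have "x \<in> A \<or> (x \<in> B \<and> partner M x = x)" "y \<in> A \<or> (y \<in> B \<and> partner M y = y)"
      using xy(1,2) partner_image_iff[OF M] by blast+
    then consider "x \<in> A" "y \<in> A" | "x \<in> B" "y \<in> B"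
      | "x \<in> A" "y \<in> B" "partner M y = y" | "x \<in> B" "partner M x = x" "y \<in> A"
      by blast
    then show "x = y"
    proof cases
      case 1
      then show ?thesis using injA xy(3) by (simp add: inj_on_eq_iff)
    next
      case 2
      then show ?thesis using injB xy(3) by (simp add: inj_on_eq_iff)
    next
      case 3
      then show ?thesis using no_cross[of x y] xy(3) by simp
    next
      case 4
      then show ?thesis using no_cross[of y x] xy(3) by simp
    qed
  qed
qed

lemma factored_colouring_pattern:
  assumes M: "matching M" and f: "f \<in> V \<rightarrow>\<^sub>E {..<n}"
    and retract: "\<forall>x\<in>V. f (partner M x) = f x" and inj: "inj_on f (partner M ` V)"
  shows "f \<in> pattern_colourings n M"
proof -
  have same: "f x = f y \<longleftrightarrow> partner M x = partner M y" if "x \<in> V" "y \<in> V" for x y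
    using that retract inj by (metis imageI inj_onD)
  have "inj_on f A" using inj partner_image_iff[OF M] by (blast intro: inj_on_subset)
  moreover have "inj_on f B"
  proof (rule inj_onI)
    fix x y assume xy: "x \<in> B" "y \<in> B" "f x = f y"
    then have p: "partner M x = partner M y" using same V_split by blast
    show "x = y"
    proof (cases "partner M x \<in> A")
      case True
      then have "{partner M x, x} \<in> M" "{partner M x, y} \<in> M"
        using p xy partner_eq_iff[OF M] by metis+
      then show ?thesis using matching_common_A[OF M True xy(1,2)] by blast
    next
      case False
      then show ?thesis using p xy partner_of_B by metis
    qed
  qed
  moreover have "f a = f b \<longleftrightarrow> {a, b} \<in> M" if "a \<in> A" "b \<in> B" for a b
  proof -
    have "f a = f b \<longleftrightarrow> partner M a = partner M b" using same that V_split by blast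
    also have "\<dots> \<longleftrightarrow> a = partner M b"
    proof -
      have "a \<notin> B" using that disjoint by blast
      then show ?thesis using partner_outside_B[OF M] by simp
    qed
    also have "\<dots> \<longleftrightarrow> {a, b} \<in> M" using partner_eq_iff[OF M that] by blast
    finally show ?thesis .
  qed
  ultimately show ?thesis unfolding pattern_colourings_def using f by blast
qed

lemma pattern_colourings_eq:
  assumes M: "matching M"
  shows "pattern_colourings n M =
    {f \<in> V \<rightarrow>\<^sub>E {..<n}. (\<forall>x\<in>V. f (partner M x) = f x) \<and> inj_on f (partner M ` V)}"
proof (rule set_eqI)
  fix f
  have "f \<in> pattern_colourings n M \<Longrightarrow> f \<in> V \<rightarrow>\<^sub>E {..<n}"
    unfolding pattern_colourings_def by blast
  then show "f \<in> pattern_colourings n M \<longleftrightarrow>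
      f \<in> {f \<in> V \<rightarrow>\<^sub>E {..<n}. (\<forall>x\<in>V. f (partner M x) = f x) \<and> inj_on f (partner M ` V)}"
    using pattern_colouring_factors[OF M] factored_colouring_pattern[OF M] by blast
qed

lemma card_pattern_colourings:
  "matching M \<Longrightarrow> card (pattern_colourings n M) = (\<Prod>i<card V - card M. n - i)"
  using card_maps_through_retraction[OF finite_V, of "partner M" n]
  by (simp add: pattern_colourings_eq card_partner_image partner_in_V partner_idem image_subset_iff)

lemma clique_edge_A: "a \<in> A \<Longrightarrow> a' \<in> A \<Longrightarrow> a \<noteq> a' \<Longrightarrow> {a, a'} \<in> E"
  using clique_A unfolding all_pairs_def by blast

lemma clique_edge_B: "b \<in> B \<Longrightarrow> b' \<in> B \<Longrightarrow> b \<noteq> b' \<Longrightarrow> {b, b'} \<in> E"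
  using clique_B unfolding all_pairs_def by blast

lemma colouring_inj:
  assumes "f \<in> colourings V E n" shows "inj_on f A" "inj_on f B"
  using assms clique_edge_A clique_edge_B unfolding colourings_def inj_on_def by blast+

definition coincidences :: "('a \<Rightarrow> nat) \<Rightarrow> 'a set set" where
  "coincidences f = {{a, b} | a b. a \<in> A \<and> b \<in> B \<and> f a = f b}"

lemma coincidences_matching:
  assumes f: "f \<in> colourings V E n" shows "matching (coincidences f)"
proof -
  have sub: "e \<in> F" if e: "e \<in> coincidences f" for e
  proof -
    obtain a b where ab: "a \<in> A" "b \<in> B" "f a = f b" "e = {a, b}"
      using e unfolding coincidences_def by blast
    have "a \<noteq> b" using ab disjoint by blast
    then have "{a, b} \<notin> E" using f ab(3) unfolding colourings_def by blast
    then show "e \<in> F" using cross_pair_in_compl ab by blast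
  qed
  have disj: "e \<inter> e' = {}" if ee: "e \<in> coincidences f" "e' \<in> coincidences f" "e \<noteq> e'" for e e'
  proof (rule ccontr)
    assume "e \<inter> e' \<noteq> {}"
    obtain a b where ab: "a \<in> A" "b \<in> B" "f a = f b" "e = {a, b}"
      using ee(1) unfolding coincidences_def by blast
    obtain a' b' where ab': "a' \<in> A" "b' \<in> B" "f a' = f b'" "e' = {a', b'}"
      using ee(2) unfolding coincidences_def by blast
    have "a = a' \<or> b = b'" using \<open>e \<inter> e' \<noteq> {}\<close> ab ab' disjoint by blast
    then have "a = a' \<and> b = b'"
      using ab ab' colouring_inj[OF f] by (metis inj_onD)
    then show False using ee(3) ab ab' by simp
  qed
  show ?thesis unfolding matching_def using sub disj by blast
qed

lemma colouring_pattern: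
  assumes f: "f \<in> colourings V E n" shows "f \<in> pattern_colourings n (coincidences f)"
proof -
  have "f a = f b \<longleftrightarrow> {a, b} \<in> coincidences f" if "a \<in> A" "b \<in> B" for a b
  proof
    assume "{a, b} \<in> coincidences f"
    then obtain a' b' where ab': "a' \<in> A" "b' \<in> B" "f a' = f b'" "{a, b} = {a', b'}"
      unfolding coincidences_def by blast
    then have "a = a' \<and> b = b'" using that disjoint by (auto simp: doubleton_eq_iff)
    then show "f a = f b" using ab' by simp
  qed (use that in \<open>auto simp: coincidences_def\<close>)
  moreover have "f \<in> V \<rightarrow>\<^sub>E {..<n}" using f unfolding colourings_def by blast
  ultimately show ?thesis unfolding pattern_colourings_def using colouring_inj[OF f] by blast
qed

text \<open>A colouring with a coincidence matching is proper: edges of G inside a clique get distinct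
  colours by injectivity, cross edges of G are not in M.\<close>
lemma pattern_colouring_proper:
  assumes M: "matching M" and f: "f \<in> pattern_colourings n M"
  shows "f \<in> colourings V E n"
proof -
  have f': "f \<in> V \<rightarrow>\<^sub>E {..<n}" "inj_on f A" "inj_on f B"
    "\<And>a b. a \<in> A \<Longrightarrow> b \<in> B \<Longrightarrow> f a = f b \<longleftrightarrow> {a, b} \<in> M"
    using f unfolding pattern_colourings_def by blast+
  have cross: "f a \<noteq> f b" if "a \<in> A" "b \<in> B" "{a, b} \<in> E" for a b
  proof -
    have "{a, b} \<notin> M" using that M cross_pair_in_compl unfolding matching_def by blast
    then show ?thesis using f'(4) that by blast
  qed
  have "f u \<noteq> f v" if "{u, v} \<in> E" "u \<noteq> v" for u v
  proof -
    have "u \<in> V" "v \<in> V" using that edges_in_V unfolding all_pairs_def by (auto simp: doubleton_eq_iff)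
    then consider "u \<in> A" "v \<in> A" | "u \<in> B" "v \<in> B" | "u \<in> A" "v \<in> B" | "u \<in> B" "v \<in> A"
      using V_split by blast
    then show ?thesis
    proof cases
      case 1
      then show ?thesis using f'(2) that(2) by (simp add: inj_on_eq_iff)
    next
      case 2
      then show ?thesis using f'(3) that(2) by (simp add: inj_on_eq_iff)
    next
      case 3
      then show ?thesis using cross that(1) by blast
    next
      case 4
      then show ?thesis using cross[of v u] that(1) by (simp add: insert_commute)
    qed
  qed
  then show ?thesis using f'(1) unfolding colourings_def by blast
qed

lemma colourings_partition:
  "colourings V E n = (\<Union>M\<in>{M. matching M}. pattern_colourings n M)"
  using coincidences_matching colouring_pattern pattern_colouring_proper by blast

lemma pattern_colourings_disjoint:
  assumes M: "matching M" and M': "matching M'"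
    and "f \<in> pattern_colourings n M" "f \<in> pattern_colourings n M'"
  shows "M = M'"
proof -
  have "\<forall>a\<in>A. \<forall>b\<in>B. {a, b} \<in> M \<longleftrightarrow> {a, b} \<in> M'"
    using assms(3,4) unfolding pattern_colourings_def by blast
  then show ?thesis using M M' by (blast elim: matching_edge)
qed

theorem card_colourings:
  "card (colourings V E n) =
     (\<Sum>i\<le>card A. matching_number F i * (\<Prod>t<card V - i. n - t))"
proof -
  let ?PC = "pattern_colourings n"
  have fin: "finite (?PC M)" for M
  proof (rule finite_subset)
    show "?PC M \<subseteq> V \<rightarrow>\<^sub>E {..<n}" unfolding pattern_colourings_def by blast
  qed (simp add: finite_V finite_PiE)
  have "card (colourings V E n) = (\<Sum>M\<in>{M. matching M}. card (?PC M))"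
    unfolding colourings_partition
    using finite_matchings fin pattern_colourings_disjoint by (subst card_UN_disjoint) blast+
  also have "\<dots> = (\<Sum>M\<in>{M. matching M}. \<Prod>t<card V - card M. n - t)"
    by (rule sum.cong) (simp_all add: card_pattern_colourings)
  also have "\<dots> = (\<Sum>i\<le>card A. \<Sum>M\<in>{M \<in> {M. matching M}. card M = i}. \<Prod>t<card V - card M. n - t)"
    by (rule sum.group[symmetric]) (use finite_matchings card_matching_le in auto)
  also have "\<dots> = (\<Sum>i\<le>card A. matching_number F i * (\<Prod>t<card V - i. n - t))"
    by (rule sum.cong) (simp_all add: matching_number_def matchings_eq)
  finally show ?thesis .
qed

end

lemma chrom_poly_eqI:
  assumes "\<And>n. poly p (int n) = int (card (colourings V E n))"
  shows "chrom_poly V E = p"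
  unfolding chrom_poly_def
proof (rule the_equality)
  fix q assume "\<forall>n. poly q (int n) = int (card (colourings V E n))"
  then show "q = p" using assms by (intro poly_eq_on_nat) simp
qed (use assms in blast)

theorem biclique_interesting_factor:
  assumes "biclique j k V E"
  shows "interesting_factor k V E =
    (\<Sum>i\<le>j. smult (int (matching_number (compl_edges V E) i)) (shifted_falling_poly k (j - i)))"
    (is "_ = ?q")
proof -
  obtain A B where AB: "simple_graph V E" "A \<inter> B = {}" "V = A \<union> B" "card A = j" "card B = k"
    "all_pairs A \<subseteq> E" "all_pairs B \<subseteq> E"
    using assms unfolding biclique_def by blast
  interpret biclique_split V E A B
    using AB unfolding simple_graph_def by unfold_locales auto
  have card_V: "card V = k + j" using AB finite_V by (simp add: card_Un_disjoint)
  have "chrom_poly V E = falling_poly k * ?q"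
  proof (rule chrom_poly_eqI)
    fix n
    have "poly (falling_poly k * ?q) (int n) =
        (\<Sum>i\<le>j. int (matching_number F i) * poly (falling_poly k * shifted_falling_poly k (j - i)) (int n))"
      by (simp add: poly_sum sum_distrib_left mult_ac)
    also have "\<dots> = (\<Sum>i\<le>j. int (matching_number F i) * poly (falling_poly (k + (j - i))) (int n))"
      by (simp only: falling_poly_add)
    also have "\<dots> = (\<Sum>i\<le>j. int (matching_number F i) * (\<Prod>t<card V - i. int n - int t))"
      by (rule sum.cong) (simp_all add: poly_falling_poly card_V)
    also have "\<dots> = int (card (colourings V E n))"
      by (simp add: card_colourings AB(4) int_prod_diff del: of_nat_prod)
    finally show "poly (falling_poly k * ?q) (int n) = int (card (colourings V E n))" .
  qed
  then show ?thesis
    unfolding interesting_factor_def using falling_poly_nonzero by simp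
qed

theorem mainTheorem2:
  fixes VG :: "'a set" and EG :: "'a set set" and VH :: "'b set" and EH :: "'b set set"
    and j kG kH :: nat
  assumes "1 \<le> j" and "j \<le> kG" and "kG \<le> kH"
    and "biclique j kG VG EG" and "biclique j kH VH EH"
    and "matching_equivalent (compl_edges VG EG) (compl_edges VH EH)"
  shows "interesting_factor kG VG EG
           = pcompose (interesting_factor kH VH EH) [:int kH - int kG, 1:]"
proof -
  have same_matchings: "matching_number (compl_edges VG EG) i = matching_number (compl_edges VH EH) i" for i
    using assms(6) unfolding matching_equivalent_def by blast
  have shift: "pcompose (shifted_falling_poly kH m) [:int kH - int kG, 1:] = shifted_falling_poly kG m" for m
    using shifted_falling_poly_pcompose[of kG "kH - kG" m] assms(3) by (simp add: of_nat_diff)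
  show ?thesis
    unfolding biclique_interesting_factor[OF assms(4)] biclique_interesting_factor[OF assms(5)]
    by (simp add: pcompose_sum pcompose_smult shift same_matchings)
qed

end
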